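(* Consider the composite linear model described in the context, with squared ($\ell_2$) loss, and let $\mathcal{S}=\{(\mathbf{x}_i,y_i)\}_{i=1}^m$ be a dataset generated i.i.d. from it. Let $\mathcal{M}=[K]$ and $\mathcal{N}=[K-1]$, and let $\hat{\mathbf{A}}_{\mathcal{M}}$, $\hat{\mathbf{A}}_{\mathcal{N}}$ denote the projection matrices estimated (by empirical risk minimization) using the $\mathcal{M}$ modalities (over $\mathcal{G}_{\mathcal{M}}=\mathcal{G}$) and the $\mathcal{N}$ modalities (over $\mathcal{G}_{\mathcal{N}}$), respectively. Assume that $\hat{\mathbf{A}}_{\mathcal{M}}$ and $\mathbf{A}^\star$ have orthonormal columns. If $n=d$, then for a sufficiently large constant $C_b$, $$\gamma_{\mathcal{S}}(\mathcal{M},\mathcal{N}):=\eta(\hat{\mathbf{A}}_{\mathcal{M}})-\eta(\hat{\mathbf{A}}_{\mathcal{N}})\le 0.$$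
   Context: Data: $\mathbf{x}=(\mathbf{x}^{(1)},\dots,\mathbf{x}^{(K)})\in\mathbb{R}^d$ with $\mathbf{x}^{(k)}\in\mathbb{R}^{d_k}$ the feature vector of the $k$-th modality and $\sum_{k=1}^K d_k=d$; the distribution $\mathbb{P}_{\mathbf{x}}$ has a positive definite covariance matrix $\Sigma$. Labels are generated by $y=(\boldsymbol\beta^\star)^\top(\mathbf{A}^\star)^\top\mathbf{x}+\epsilon$, where $\epsilon$ is a random variable independent of $\mathbf{x}$ with zero mean and bounded second moment, $\mathbf{A}^\star\in\mathbb{R}^{d\times n}$, $\boldsymbol\beta^\star\in\mathbb{R}^n$ (with $\|\boldsymbol\beta^\star\|\le C_b$). Function classes: $\mathcal{G}=\{\mathbf{x}\mapsto\mathbf{A}^\top\mathbf{x}:\mathbf{A}\in\mathbb{R}^{d\times n}\}$, $\mathcal{H}=\{\mathbf{z}\mapsto\boldsymbol\beta^\top\mathbf{z}:\boldsymbol\beta\in\mathbb{R}^n,\|\boldsymbol\beta\|\le C_b\}$. For $\mathcal{M}=[K]$, $\mathcal{G}_{\mathcal{M}}=\mathcal{G}$; for $\mathcal{N}=[K-1]$, $\mathcal{G}_{\mathcal{N}}=\{\mathbf{x}\mapsto\begin{bmatrix}\mathbf{A}_{1:s}\\ \mathbf{0}\end{bmatrix}^\top\mathbf{x} : \mathbf{A}\in\mathbb{R}^{d\times n}\text{ with orthonormal columns}\}$, where $s=\sum_{k=1}^{K-1}d_k$, $\mathbf{A}_{1:s}$ denotes the first $s$ rows of $\mathbf{A}$,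 and $\mathbf{0}$ is the $d_K\times n$ zero block (so the last modality is ignored). The latent representation quality of a linear representation $\mathbf{x}\mapsto\mathbf{A}^\top\mathbf{x}$ under squared loss is $\eta(\mathbf{A})=\inf_{h\in\mathcal{H}}[r(h\circ g)-r(h^\star\circ g^\star)]=\inf_{\|\boldsymbol\beta\|\le C_b}\mathbb{E}_{\mathbf{x}}\big[|\boldsymbol\beta^\top\mathbf{A}^\top\mathbf{x}-(\boldsymbol\beta^\star)^\top(\mathbf{A}^\star)^\top\mathbf{x}|^2\big]$, where $r$ is the population squared-loss risk and $g^\star(\mathbf{x})=(\mathbf{A}^\star)^\top\mathbf{x}$, $h^\star(\mathbf{z})=(\boldsymbol\beta^\star)^\top\mathbf{z}$. *)

theory Defs
  imports "HOL-Probability.Probability"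
begin

text \<open>Vectors in R^k are represented as functions nat => real, only indices < k matter;
  a d x n matrix A is a function nat => nat => real, entry A i j for i < d, j < n.\<close>

definition vnorm :: "nat \<Rightarrow> (nat \<Rightarrow> real) \<Rightarrow> real" where
  "vnorm k v = sqrt (\<Sum>j<k. (v j)^2)"

definition linpred :: "nat \<Rightarrow> nat \<Rightarrow> (nat \<Rightarrow> nat \<Rightarrow> real) \<Rightarrow> (nat \<Rightarrow> real) \<Rightarrow> (nat \<Rightarrow> real) \<Rightarrow> real" where
  "linpred d n A \<beta> x = (\<Sum>j<n. \<beta> j * (\<Sum>i<d. A i j * x i))"

definition orthonormal_cols :: "nat \<Rightarrow> nat \<Rightarrow> (nat \<Rightarrow> nat \<Rightarrow> real) \<Rightarrow> bool" where
  "orthonormal_cols d n A \<longleftrightarrow>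
     (\<forall>j<n. \<forall>k<n. (\<Sum>i<d. A i j * A i k) = (if j = k then 1 else 0))"

definition trunc_rows :: "nat \<Rightarrow> (nat \<Rightarrow> nat \<Rightarrow> real) \<Rightarrow> (nat \<Rightarrow> nat \<Rightarrow> real)" where
  "trunc_rows s A = (\<lambda>i j. if i < s then A i j else 0)"

text \<open>Matrices representing G_N: [A_{1:s}; 0] with A (d x n) having orthonormal columns,
  where s = d_1 + ... + d_{K-1}.\<close>
definition GN_mats :: "nat list \<Rightarrow> nat \<Rightarrow> (nat \<Rightarrow> nat \<Rightarrow> real) set" where
  "GN_mats dims n = {trunc_rows (sum_list (butlast dims)) A | A. orthonormal_cols (sum_list dims) n A}"

definition emp_risk :: "nat \<Rightarrow> (nat \<Rightarrow> nat \<Rightarrow> real) \<Rightarrow> (nat \<Rightarrow> real) \<Rightarrow> nat \<Rightarrow> nat \<Rightarrow>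
    (nat \<Rightarrow> nat \<Rightarrow> real) \<Rightarrow> (nat \<Rightarrow> real) \<Rightarrow> real" where
  "emp_risk m xs ys d n A \<beta> = (1 / real m) * (\<Sum>i<m. (linpred d n A \<beta> (xs i) - ys i)^2)"

definition is_erm :: "(nat \<Rightarrow> nat \<Rightarrow> real) set \<Rightarrow> real \<Rightarrow> nat \<Rightarrow> (nat \<Rightarrow> nat \<Rightarrow> real) \<Rightarrow> (nat \<Rightarrow> real) \<Rightarrow>
    nat \<Rightarrow> nat \<Rightarrow> (nat \<Rightarrow> nat \<Rightarrow> real) \<Rightarrow> (nat \<Rightarrow> real) \<Rightarrow> bool" where
  "is_erm G Cb m xs ys d n A \<beta> \<longleftrightarrow>
     A \<in> G \<and> vnorm n \<beta> \<le> Cb \<and>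
     (\<forall>A'\<in>G. \<forall>\<beta>'. vnorm n \<beta>' \<le> Cb \<longrightarrow> emp_risk m xs ys d n A \<beta> \<le> emp_risk m xs ys d n A' \<beta>')"

definition eta :: "'w measure \<Rightarrow> ('w \<Rightarrow> nat \<Rightarrow> real) \<Rightarrow> nat \<Rightarrow> nat \<Rightarrow> real \<Rightarrow>
    (nat \<Rightarrow> nat \<Rightarrow> real) \<Rightarrow> (nat \<Rightarrow> real) \<Rightarrow> (nat \<Rightarrow> nat \<Rightarrow> real) \<Rightarrow> real" where
  "eta P X d n Cb Astar bstar A =
     Inf ((\<lambda>\<beta>. integral\<^sup>L P (\<lambda>\<omega>. (linpred d n A \<beta> (X \<omega>) - linpred d n Astar bstar (X \<omega>))^2))
          ` {\<beta>. vnorm n \<beta> \<le> Cb})"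

definition cov_mat :: "'w measure \<Rightarrow> ('w \<Rightarrow> nat \<Rightarrow> real) \<Rightarrow> nat \<Rightarrow> nat \<Rightarrow> real" where
  "cov_mat P X i j = integral\<^sup>L P (\<lambda>\<omega>. (X \<omega> i - integral\<^sup>L P (\<lambda>\<nu>. X \<nu> i)) *
                                           (X \<omega> j - integral\<^sup>L P (\<lambda>\<nu>. X \<nu> j)))"

definition cov_pos_def :: "'w measure \<Rightarrow> ('w \<Rightarrow> nat \<Rightarrow> real) \<Rightarrow> nat \<Rightarrow> bool" where
  "cov_pos_def P X d \<longleftrightarrow>
     (\<forall>v. (\<exists>i<d. v i \<noteq> 0) \<longrightarrow> (\<Sum>i<d. \<Sum>j<d. v i * cov_mat P X i j * v j) > 0)"

end

theory Submission
  imports Defs "Jordan_Normal_Form.Determinant"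
begin

text \<open>For \<open>n = d\<close> the matrix \<open>A\<^sub>M\<close> is square with orthonormal columns, hence orthogonal,
  so its rows are orthonormal too. Then \<open>\<beta> = A\<^sub>M\<^sup>T A\<^sup>\<star> \<beta>\<^sup>\<star>\<close> satisfies
  \<open>A\<^sub>M \<beta> = A\<^sup>\<star> \<beta>\<^sup>\<star>\<close> and \<open>\<parallel>\<beta>\<parallel> = \<parallel>\<beta>\<^sup>\<star>\<parallel> \<le> C\<^sub>b\<close>, so the representation \<open>A\<^sub>M\<close>
  reproduces the true predictor exactly and \<open>\<eta>(A\<^sub>M) = 0\<close>, while \<open>\<eta>\<close> is always
  nonnegative.\<close>

lemma orthonormal_cols_square_transpose:
  assumes "orthonormal_cols d d A"
  shows "orthonormal_cols d d (\<lambda>i j. A j i)"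
proof -
  define M where "M = mat d d (\<lambda>(i, j). A i j)"
  have M: "M \<in> carrier_mat d d" and MT: "transpose_mat M \<in> carrier_mat d d"
    unfolding M_def by simp_all
  have "transpose_mat M * M = 1\<^sub>m d"
  proof (rule eq_matI)
    fix i j assume "i < dim_row (1\<^sub>m d)" "j < dim_col (1\<^sub>m d)"
    then show "(transpose_mat M * M) $$ (i, j) = 1\<^sub>m d $$ (i, j)"
      using assms unfolding M_def orthonormal_cols_def
      by (simp add: scalar_prod_def lessThan_atLeast0)
  qed (use M in auto)
  then have "M * transpose_mat M = 1\<^sub>m d"
    using mat_mult_left_right_inverse[OF MT M] by simp
  show ?thesis
    unfolding orthonormal_cols_def
  proof (intro allI impI)
    fix i k assume "i < d" "k < d"
    with \<open>M * transpose_mat M = 1\<^sub>m d\<close>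
    have "(M * transpose_mat M) $$ (i, k) = 1\<^sub>m d $$ (i, k)" by simp
    with \<open>i < d\<close> \<open>k < d\<close> show "(\<Sum>j<d. A i j * A k j) = (if i = k then 1 else 0)"
      unfolding M_def by (simp add: scalar_prod_def lessThan_atLeast0)
  qed
qed

lemma vnorm_nonneg: "0 \<le> vnorm n v"
  unfolding vnorm_def by (simp add: sum_nonneg)

lemma orthonormal_cols_gram:
  assumes "orthonormal_cols d n B"
  shows "(\<Sum>i<d. (\<Sum>j<n. B i j * v j) * (\<Sum>k<n. B i k * w k)) = (\<Sum>j<n. v j * w j)"
proof -
  have "(\<Sum>i<d. (\<Sum>j<n. B i j * v j) * (\<Sum>k<n. B i k * w k))
      = (\<Sum>i<d. \<Sum>j<n. \<Sum>k<n. v j * w k * (B i j * B i k))"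
    by (simp add: sum_product mult_ac)
  also have "\<dots> = (\<Sum>j<n. \<Sum>k<n. v j * w k * (\<Sum>i<d. B i j * B i k))"
    by (simp add: sum_distrib_left sum.swap[of _ "{..<d}"])
  also have "\<dots> = (\<Sum>j<n. \<Sum>k<n. v j * w k * (if j = k then 1 else 0))"
    using assms unfolding orthonormal_cols_def by simp
  also have "\<dots> = (\<Sum>j<n. v j * w j)"
    by (simp add: if_distrib[of "\<lambda>t. _ * t"] sum.delta cong: if_cong)
  finally show ?thesis .
qed

lemma vnorm_orthonormal_cols_mult:
  assumes "orthonormal_cols d n B"
  shows "vnorm d (\<lambda>i. \<Sum>j<n. B i j * v j) = vnorm n v"
  using orthonormal_cols_gram[OF assms, of v v] unfolding vnorm_def power2_eq_square by simp

lemma orthonormal_cols_transpose_mult: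
  assumes "orthonormal_cols d n B" "j < n"
  shows "(\<Sum>i<d. B i j * (\<Sum>k<n. B i k * v k)) = v j"
  using orthonormal_cols_gram[OF assms(1), of "\<lambda>k. if k = j then 1 else 0" v] assms(2)
  by (simp add: if_distrib[of "\<lambda>t. _ * t"] if_distrib[of "\<lambda>t. t * _"] sum.delta cong: if_cong)

lemma linpred_eq_sum:
  "linpred d n A \<beta> x = (\<Sum>i<d. x i * (\<Sum>j<n. A i j * \<beta> j))"
  unfolding linpred_def
  by (simp add: sum_distrib_left sum.swap[of _ "{..<n}"] mult_ac)

text \<open>The hypothesis says that the rows of \<open>A\<close> are orthonormal; the witness is \<open>\<beta> = A\<^sup>T c\<close>.\<close>

lemma linpred_realizes_linear_functional:
  assumes "orthonormal_cols n d (\<lambda>j i. A i j)"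
  shows "\<exists>\<beta>. vnorm n \<beta> = vnorm d c \<and> (\<forall>x. linpred d n A \<beta> x = (\<Sum>i<d. x i * c i))"
proof (intro exI conjI allI)
  let ?\<beta> = "\<lambda>j. \<Sum>i<d. A i j * c i"
  show "vnorm n ?\<beta> = vnorm d c"
    using vnorm_orthonormal_cols_mult[OF assms] .
  show "linpred d n A ?\<beta> x = (\<Sum>i<d. x i * c i)" for x
    unfolding linpred_eq_sum
    using orthonormal_cols_transpose_mult[OF assms] by simp
qed

lemma eta_nonneg:
  assumes "0 \<le> Cb"
  shows "0 \<le> eta P X d n Cb Astar bstar A"
proof -
  have "(\<lambda>_. 0) \<in> {\<beta>. vnorm n \<beta> \<le> Cb}"
    using assms by (simp add: vnorm_def)
  then show ?thesis
    unfolding eta_def by (intro cInf_greatest) auto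
qed

lemma eta_eq_0_if_exact:
  assumes "vnorm n \<beta> \<le> Cb"
    and "\<And>x. linpred d n A \<beta> x = linpred d n Astar bstar x"
  shows "eta P X d n Cb Astar bstar A = 0"
proof (rule antisym)
  have "0 \<le> Cb"
    using assms(1) vnorm_nonneg order.trans by blast
  then show "0 \<le> eta P X d n Cb Astar bstar A"
    by (rule eta_nonneg)
  have "0 \<in> (\<lambda>\<beta>. integral\<^sup>L P (\<lambda>\<omega>. (linpred d n A \<beta> (X \<omega>) - linpred d n Astar bstar (X \<omega>))\<^sup>2))
                 ` {\<beta>. vnorm n \<beta> \<le> Cb}"
    using assms by (intro image_eqI[where x = \<beta>]) simp_all
  then show "eta P X d n Cb Astar bstar A \<le> 0"
    unfolding eta_def
    by (rule cInf_lower) (auto simp: bdd_below_def intro!: exI[of _ 0])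
qed

theorem proposition1:
  fixes P :: "'w measure" and X :: "'w \<Rightarrow> nat \<Rightarrow> real" and eps :: "'w \<Rightarrow> real"
    and Y :: "'w \<Rightarrow> real" and dims :: "nat list" and d n :: nat
    and Astar :: "nat \<Rightarrow> nat \<Rightarrow> real" and bstar :: "nat \<Rightarrow> real"
  assumes "prob_space P"
    and "dims \<noteq> []" and "\<forall>k\<in>set dims. 0 < k" and "d = sum_list dims"
    and "\<forall>i<d. (\<lambda>\<omega>. X \<omega> i) \<in> borel_measurable P"
    and "\<forall>i<d. integrable P (\<lambda>\<omega>. (X \<omega> i)^2)"
    and "cov_pos_def P X d"
    and "eps \<in> borel_measurable P" and "integrable P (\<lambda>\<omega>. (eps \<omega>)^2)"
    and "integral\<^sup>L P eps = 0"
    and "prob_space.indep_set P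
              {eps -` S \<inter> space P | S. S \<in> sets borel}
              {(\<lambda>\<omega>. restrict (X \<omega>) {..<d}) -` S \<inter> space P | S. S \<in> sets (PiM {..<d} (\<lambda>_. borel))}"
    and "\<forall>\<omega>\<in>space P. Y \<omega> = linpred d n Astar bstar (X \<omega>) + eps \<omega>"
    and "orthonormal_cols d n Astar"
    and "n = d"
  shows "\<exists>C0. \<forall>Cb \<ge> C0. vnorm n bstar \<le> Cb \<longrightarrow>
           (\<forall>m xs ys AM bM AN bN.
              0 < m \<and>
              is_erm UNIV Cb m xs ys d n AM bM \<and>
              is_erm (GN_mats dims n) Cb m xs ys d n AN bN \<and>
              orthonormal_cols d n AM \<longrightarrow>
              eta P X d n Cb Astar bstar AM - eta P X d n Cb Astar bstar AN \<le> 0)"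
proof (intro exI[of _ 0] allI impI, elim conjE)
  fix Cb m xs ys AM bM AN bN
  assume Cb: "vnorm n bstar \<le> Cb" and AM: "orthonormal_cols d n AM"
  let ?c = "\<lambda>i. \<Sum>j<n. Astar i j * bstar j"
  have "orthonormal_cols n d (\<lambda>j i. AM i j)"
    using orthonormal_cols_square_transpose[of d AM] AM \<open>n = d\<close> by simp
  then obtain \<beta> where norm: "vnorm n \<beta> = vnorm d ?c"
    and exact: "\<And>x. linpred d n AM \<beta> x = (\<Sum>i<d. x i * ?c i)"
    using linpred_realizes_linear_functional by blast
  have "vnorm n \<beta> \<le> Cb"
    using norm Cb vnorm_orthonormal_cols_mult[OF \<open>orthonormal_cols d n Astar\<close>] by simp
  then have "eta P X d n Cb Astar bstar AM = 0"
    by (rule eta_eq_0_if_exact) (use exact in \<open>simp add: linpred_eq_sum[of d n Astar]\<close>)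
  moreover have "0 \<le> eta P X d n Cb Astar bstar AN"
    using Cb vnorm_nonneg[of n bstar] by (intro eta_nonneg) simp
  ultimately show "eta P X d n Cb Astar bstar AM - eta P X d n Cb Astar bstar AN \<le> 0"
    by simp
qed

end
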